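(* Let $C=L_1;\ldots;L_d$ be a sorting network on $n$ channels of depth $d\ge2$ whose last layer is in last layer normal form. Suppose that $(i,i+1)\in L_d$, that channel $i+2$ is used in layer $L_{d-1}$ but not in layer $L_d$, and that channels $i$ and $i+1$ are both unused in layer $L_{d-1}$. Then there is a sorting network $C'=L'_1;\ldots;L'_d$ on $n$ channels of depth $d$ whose last layer is in last layer normal form and such that channels $i+1$ and $i+2$ are both used in layers $L'_{d-1}$ and $L'_d$.
   Context: Channels are numbered $1,\ldots,n$. A comparator network of depth $d$ is a sequence $C=L_1;\ldots;L_d$ of layers; each layer is a set of comparators $(i,j)$ with $1\le i<j\le n$, each channel occurring in at most one comparator of a layer. An input $\bar x\in\{0,1\}^n$ propagates: $\bar x_0=\bar x$, and $\bar x_k$ is obtained from $\bar x_{k-1}$ by, for each $(i,j)\in L_k$, putting the minimum of the values at positions $i,j$ at position $i$ and the maximum at position $j$. The output is $C(\bar x)=\bar x_d$; $C$ is a sorting network if $C(\bar x)$ is sorted non-decreasingly for all $\bar x\in\{0,1\}^n$. A channel is used in a layer if it occurs in some comparator of that layer. The last layer $L_d$ is in last layer normal form if every comparator of $L_d$ is of the form $(i,i+1)$ and there is no $i<n$ with both $i$ and $i+1$ unused in $L_d$. *)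

theory Defs
  imports Main
begin

type_synonym comparator = "nat \<times> nat"
type_synonym layer = "comparator set"
type_synonym network = "layer list"

definition is_layer :: "nat \<Rightarrow> layer \<Rightarrow> bool" where
  "is_layer n L \<longleftrightarrow>
     (\<forall>(i,j)\<in>L. 1 \<le> i \<and> i < j \<and> j \<le> n) \<and>
     (\<forall>c\<in>L. \<forall>c'\<in>L. c \<noteq> c' \<longrightarrow>
        {fst c, snd c} \<inter> {fst c', snd c'} = {})"

definition is_network :: "nat \<Rightarrow> network \<Rightarrow> bool" where
  "is_network n C \<longleftrightarrow> (\<forall>L\<in>set C. is_layer n L)"

definition used :: "layer \<Rightarrow> nat \<Rightarrow> bool" where
  "used L k \<longleftrightarrow> (\<exists>(i,j)\<in>L. k = i \<or> k = j)"

(* Inputs are 0/1 vectors, modelled as nat => bool (False = 0, True = 1);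
   only positions 1..n are relevant. *)
definition apply_layer :: "layer \<Rightarrow> (nat \<Rightarrow> bool) \<Rightarrow> (nat \<Rightarrow> bool)" where
  "apply_layer L x = (\<lambda>k.
     if \<exists>j. (k, j) \<in> L then x k \<and> x (THE j. (k, j) \<in> L)
     else if \<exists>i. (i, k) \<in> L then x k \<or> x (THE i. (i, k) \<in> L)
     else x k)"

definition run :: "network \<Rightarrow> (nat \<Rightarrow> bool) \<Rightarrow> (nat \<Rightarrow> bool)" where
  "run C x = fold apply_layer C x"

definition sorted01 :: "nat \<Rightarrow> (nat \<Rightarrow> bool) \<Rightarrow> bool" where
  "sorted01 n y \<longleftrightarrow> (\<forall>i j. 1 \<le> i \<and> i \<le> j \<and> j \<le> n \<longrightarrow> (y i \<longrightarrow> y j))"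

definition sorting_network :: "nat \<Rightarrow> network \<Rightarrow> bool" where
  "sorting_network n C \<longleftrightarrow> is_network n C \<and> (\<forall>x. sorted01 n (run C x))"

definition last_layer_nf :: "nat \<Rightarrow> layer \<Rightarrow> bool" where
  "last_layer_nf n L \<longleftrightarrow>
     (\<forall>(i,j)\<in>L. j = i + 1) \<and>
     \<not> (\<exists>i. 1 \<le> i \<and> i < n \<and> \<not> used L i \<and> \<not> used L (i + 1))"

end

theory Submission
  imports Defs
begin

text \<open>
  The comparator \<open>(i, i + 1)\<close> of the last layer can be moved into the penultimate
  layer, where channels \<open>i\<close> and \<open>i + 1\<close> are free. In the vacated place of the last layer we put
  \<open>(i + 1, i + 2)\<close> (channel \<open>i + 2\<close> is free there), together with \<open>(i - 1, i)\<close> if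
  channel \<open>i - 1\<close> would otherwise be left unused next to the now unused channel \<open>i\<close>;
  this keeps the last layer in normal form. Since comparators on disjoint channels commute,
  the new network computes the output of the old one followed by the added comparators,
  and a layer leaves a sorted vector unchanged.
\<close>

lemma is_layer_comparator_eq:
  assumes "is_layer n L" "(a, b) \<in> L" "(a', b') \<in> L" "{a, b} \<inter> {a', b'} \<noteq> {}"
  shows "(a, b) = (a', b')"
  using assms unfolding is_layer_def by (metis fst_conv snd_conv)

lemma apply_layer_min:
  assumes "is_layer n L" "(a, b) \<in> L"
  shows "apply_layer L x a = (x a \<and> x b)"
proof -
  have "(THE j. (a, j) \<in> L) = b"
    using is_layer_comparator_eq[OF assms(1) assms(2)] assms(2) by blast
  then show ?thesis using assms(2) unfolding apply_layer_def by auto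
qed

lemma apply_layer_max:
  assumes "is_layer n L" "(a, b) \<in> L"
  shows "apply_layer L x b = (x b \<or> x a)"
proof -
  have "a < b" using assms unfolding is_layer_def by auto
  then have "\<not> (\<exists>j. (b, j) \<in> L)"
    using is_layer_comparator_eq[OF assms(1) assms(2)] by blast
  moreover have "(THE i. (i, b) \<in> L) = a"
    using is_layer_comparator_eq[OF assms(1) assms(2)] assms(2) by blast
  ultimately show ?thesis using assms(2) unfolding apply_layer_def by auto
qed

lemma apply_layer_unused: "\<not> used L k \<Longrightarrow> apply_layer L x k = x k"
  unfolding apply_layer_def used_def by auto

lemma used_Un: "used (L \<union> L') k \<longleftrightarrow> used L k \<or> used L' k"
  unfolding used_def by auto

lemma used_insert: "used (insert (a, b) L) k \<longleftrightarrow> k = a \<or> k = b \<or> used L k"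
  unfolding used_def by auto

lemma used_empty: "\<not> used {} k"
  unfolding used_def by auto

lemma is_layer_subset: "is_layer n L \<Longrightarrow> L' \<subseteq> L \<Longrightarrow> is_layer n L'"
  unfolding is_layer_def by blast

lemma is_layer_insert:
  assumes "is_layer n L" "1 \<le> a" "a < b" "b \<le> n" "\<not> used L a" "\<not> used L b"
  shows "is_layer n (insert (a, b) L)"
proof -
  have "{a, b} \<inter> {fst c, snd c} = {}" if "c \<in> L" for c
    using that assms(5,6) unfolding used_def by force
  then show ?thesis using assms(1-4) unfolding is_layer_def by auto
qed

lemma apply_layer_Un:
  assumes L: "is_layer n (L1 \<union> L2)" and disj: "\<And>k. used L1 k \<Longrightarrow> \<not> used L2 k"
  shows "apply_layer (L1 \<union> L2) x = apply_layer L2 (apply_layer L1 x)"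
proof
  fix k
  have L1: "is_layer n L1" and L2: "is_layer n L2" using L is_layer_subset by blast+
  consider a b where "(a, b) \<in> L1" "k = a \<or> k = b"
    | a b where "(a, b) \<in> L2" "k = a \<or> k = b"
    | "\<not> used (L1 \<union> L2) k"
    unfolding used_def by blast
  then show "apply_layer (L1 \<union> L2) x k = apply_layer L2 (apply_layer L1 x) k"
  proof cases
    case (1 a b)
    then have "\<not> used L2 a" "\<not> used L2 b" using disj unfolding used_def by blast+
    with 1 show ?thesis
      using apply_layer_min[OF L, of a b] apply_layer_max[OF L, of a b]
        apply_layer_min[OF L1, of a b] apply_layer_max[OF L1, of a b]
      by (metis Un_iff apply_layer_unused)
  next
    case (2 a b)
    then have "\<not> used L1 a" "\<not> used L1 b" using disj unfolding used_def by blast+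
    with 2 show ?thesis
      using apply_layer_min[OF L, of a b] apply_layer_max[OF L, of a b]
        apply_layer_min[OF L2, of a b] apply_layer_max[OF L2, of a b]
      by (metis Un_iff apply_layer_unused)
  next
    case 3
    then show ?thesis by (simp add: apply_layer_unused used_Un)
  qed
qed

lemma sorted01_apply_layer:
  assumes "is_layer n L" "sorted01 n y"
  shows "sorted01 n (apply_layer L y)"
proof -
  have "apply_layer L y k = y k" if "1 \<le> k" "k \<le> n" for k
  proof (cases "used L k")
    case True
    then obtain a b where ab: "(a, b) \<in> L" "k = a \<or> k = b" unfolding used_def by auto
    then have "1 \<le> a" "a \<le> b" "b \<le> n" using assms(1) unfolding is_layer_def by auto
    then have "y a \<longrightarrow> y b" using assms(2) unfolding sorted01_def by blast
    then show ?thesis using ab apply_layer_min[OF assms(1) ab(1)] apply_layer_max[OF assms(1) ab(1)]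
      by auto
  qed (simp add: apply_layer_unused)
  then show ?thesis using assms(2) unfolding sorted01_def by (metis le_trans)
qed

lemma used_Diff_comparator:
  assumes "is_layer n L" "(a, b) \<in> L"
  shows "used (L - {(a, b)}) k \<longleftrightarrow> used L k \<and> k \<noteq> a \<and> k \<noteq> b"
proof
  assume "used (L - {(a, b)}) k"
  then obtain c e where "(c, e) \<in> L" "(c, e) \<noteq> (a, b)" "k = c \<or> k = e"
    unfolding used_def by auto
  then show "used L k \<and> k \<noteq> a \<and> k \<noteq> b"
    using is_layer_comparator_eq[OF assms, of c e] unfolding used_def by blast
qed (auto simp: used_def)

definition shifted_comparators :: "layer \<Rightarrow> nat \<Rightarrow> layer" where
  "shifted_comparators L i =
     insert (i + 1, i + 2) (if 2 \<le> i \<and> \<not> used L (i - 1) then {(i - 1, i)} else {})"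

definition shifted_layer :: "layer \<Rightarrow> nat \<Rightarrow> layer" where
  "shifted_layer L i = (L - {(i, i + 1)}) \<union> shifted_comparators L i"

lemma used_shifted_comparators:
  "used (shifted_comparators L i) k \<longleftrightarrow>
     k = i + 1 \<or> k = i + 2 \<or> (2 \<le> i \<and> \<not> used L (i - 1) \<and> (k = i - 1 \<or> k = i))"
  unfolding shifted_comparators_def by (auto simp: used_insert used_empty)

lemma used_shifted_layer:
  assumes "is_layer n L" "(i, i + 1) \<in> L"
  shows "used (shifted_layer L i) k \<longleftrightarrow>
     (used L k \<and> k \<noteq> i \<and> k \<noteq> i + 1) \<or> used (shifted_comparators L i) k"
  unfolding shifted_layer_def used_Un used_Diff_comparator[OF assms] ..

lemma is_layer_shifted_layer:
  assumes L: "is_layer n L" and i: "(i, i + 1) \<in> L" "\<not> used L (i + 2)" "i + 2 \<le> n"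
  shows "is_layer n (shifted_layer L i)"
proof -
  let ?L0 = "L - {(i, i + 1)}"
  have L0: "is_layer n ?L0" using L is_layer_subset by blast
 have free: "\<not> used ?L0 i" "\<not> used ?L0 (i + 1)" "\<not> used ?L0 (i + 2)"
    using used_Diff_comparator[OF L i(1)] i(2) by auto
  have L1: "is_layer n (insert (i + 1, i + 2) ?L0)"
    using is_layer_insert[OF L0 _ _ i(3) free(2,3)] by simp
  show ?thesis
  proof (cases "2 \<le> i \<and> \<not> used L (i - 1)")
    case True
    then have "shifted_layer L i = insert (i - 1, i) (insert (i + 1, i + 2) ?L0)"
      unfolding shifted_layer_def shifted_comparators_def by auto
    moreover have "\<not> used ?L0 (i - 1)"
      using True used_Diff_comparator[OF L i(1)] by auto
    then have "is_layer n (insert (i - 1, i) (insert (i + 1, i + 2) ?L0))"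
      using True i(3) free by (intro is_layer_insert[OF L1]) (auto simp: used_insert)
    ultimately show ?thesis by simp
  next
    case False
    then have "shifted_layer L i = insert (i + 1, i + 2) ?L0"
      unfolding shifted_layer_def shifted_comparators_def by auto
    with L1 show ?thesis by simp
  qed
qed

lemma last_layer_nf_shifted_layer:
  assumes nf: "last_layer_nf n L" and L: "is_layer n L" and i: "(i, i + 1) \<in> L"
  shows "last_layer_nf n (shifted_layer L i)"
  unfolding last_layer_nf_def
proof
  let ?L' = "shifted_layer L i"
  have "\<forall>(a, b)\<in>L. b = a + 1" using nf unfolding last_layer_nf_def by blast
  then show "\<forall>(a, b)\<in>?L'. b = a + 1"
    unfolding shifted_layer_def shifted_comparators_def by auto
  have kept: "used ?L' k" if "used L k" "k \<noteq> i" "k \<noteq> i + 1" for k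
    using that by (simp add: used_shifted_layer[OF L i])
  have new: "used ?L' (i + 1)" "used ?L' (i + 2)"
    "2 \<le> i \<Longrightarrow> \<not> used L (i - 1) \<Longrightarrow> used ?L' i"
    by (auto simp: used_shifted_layer[OF L i] used_shifted_comparators)
  show "\<not> (\<exists>j. 1 \<le> j \<and> j < n \<and> \<not> used ?L' j \<and> \<not> used ?L' (j + 1))"
  proof
    assume "\<exists>j. 1 \<le> j \<and> j < n \<and> \<not> used ?L' j \<and> \<not> used ?L' (j + 1)"
    then obtain j where j: "1 \<le> j" "j < n" "\<not> used ?L' j" "\<not> used ?L' (j + 1)" by blast
    have "j \<noteq> i" "j \<noteq> i + 1" using j(3,4) new(1,2) by auto
    then have "\<not> used L j" using kept j(3) by blast
    then have "used L (j + 1)" using nf j(1,2) unfolding last_layer_nf_def by blast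
    then have "j + 1 = i" using kept[of "j + 1"] j(4) \<open>j \<noteq> i\<close> by auto
    then show False using new(3) j(1,4) \<open>\<not> used L j\<close> by auto
  qed
qed
lemma apply_layer_shifted_layer:
  assumes A: "is_layer n A" "\<not> used A i" "\<not> used A (i + 1)"
    and L: "is_layer n L" "(i, i + 1) \<in> L" "\<not> used L (i + 2)" "i + 2 \<le> n"
  shows "apply_layer (shifted_layer L i) (apply_layer (insert (i, i + 1) A) x) =
    apply_layer (shifted_comparators L i) (apply_layer L (apply_layer A x))"
proof -
  let ?c = "{(i, i + 1)}" and ?L0 = "L - {(i, i + 1)}" and ?E = "shifted_comparators L i"
  have used_L0: "used ?L0 k \<longleftrightarrow> used L k \<and> k \<noteq> i \<and> k \<noteq> i + 1" for k
    using used_Diff_comparator[OF L(1,2)] .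
  have "1 \<le> i" using L(1,2) unfolding is_layer_def by auto
  then have "is_layer n (A \<union> ?c)"
    using is_layer_insert[OF A(1)] A(2,3) L(4) by simp
  then have "apply_layer (A \<union> ?c) y = apply_layer ?c (apply_layer A y)" for y
    using A(2,3) by (intro apply_layer_Un) (auto simp: used_insert used_empty)
  moreover have "?c \<union> ?L0 = L" using L(2) by auto
  then have "apply_layer L y = apply_layer ?L0 (apply_layer ?c y)" for y
    using L(1) apply_layer_Un[of n ?c ?L0] used_L0 by (auto simp: used_insert used_empty)
  moreover have "?L0 \<union> ?E = shifted_layer L i" unfolding shifted_layer_def ..
  then have "apply_layer (shifted_layer L i) y = apply_layer ?E (apply_layer ?L0 y)" for y
    using is_layer_shifted_layer[OF L] L(3) apply_layer_Un[of n ?L0 ?E] used_L0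
    by (auto simp: used_shifted_comparators)
  ultimately show ?thesis by simp
qed

lemma take_append_last_two:
  assumes "length xs = d" "2 \<le> d"
  shows "xs = take (d - 2) xs @ [xs ! (d - 2), xs ! (d - 1)]"
proof -
  have "drop (d - 2) xs = xs ! (d - 2) # drop (d - 1) xs"
    using assms Cons_nth_drop_Suc[of "d - 2" xs] by (simp add: Suc_diff_Suc numeral_2_eq_2)
  moreover have "drop (d - 1) xs = [xs ! (d - 1)]"
    using assms Cons_nth_drop_Suc[of "d - 1" xs] by simp
  ultimately show ?thesis by (metis append_take_drop_id)
qed

theorem lemma8:
  fixes n d i :: nat and C :: network
  assumes "sorting_network n C"
    and "length C = d" and "d \<ge> 2"
    and "last_layer_nf n (C ! (d - 1))"
    and "(i, i + 1) \<in> C ! (d - 1)"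
    and "used (C ! (d - 2)) (i + 2)"
    and "\<not> used (C ! (d - 1)) (i + 2)"
    and "\<not> used (C ! (d - 2)) i"
    and "\<not> used (C ! (d - 2)) (i + 1)"
  shows "\<exists>C'. sorting_network n C' \<and> length C' = d \<and>
           last_layer_nf n (C' ! (d - 1)) \<and>
           used (C' ! (d - 2)) (i + 1) \<and> used (C' ! (d - 2)) (i + 2) \<and>
           used (C' ! (d - 1)) (i + 1) \<and> used (C' ! (d - 1)) (i + 2)"
proof -
  define P A L where "P = take (d - 2) C" and "A = C ! (d - 2)" and "L = C ! (d - 1)"
  have C: "C = P @ [A, L]"
    using take_append_last_two[OF assms(2,3)] by (simp add: P_def A_def L_def)
  have "is_network n C" and sorted: "sorted01 n (run C x)" for x
    using assms(1) unfolding sorting_network_def by auto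
  then have P: "\<forall>M\<in>set P. is_layer n M" and A: "is_layer n A" and L: "is_layer n L"
    unfolding C is_network_def by auto
  have "i + 2 \<le> n" using A assms(6) unfolding A_def used_def is_layer_def by auto
  note L_hyps = L assms(5,7)[folded L_def] this
  have "1 \<le> i" using L assms(5) unfolding L_def is_layer_def by auto
  define A' where "A' = insert (i, i + 1) A"
  define C' where "C' = P @ [A', shifted_layer L i]"
  have "is_layer n A'" using is_layer_insert[OF A] \<open>1 \<le> i\<close> L_hyps(4) assms(8,9)
    unfolding A'_def A_def by simp
  then have "is_network n C'"
    using P is_layer_shifted_layer[OF L_hyps] unfolding C'_def is_network_def by auto
  moreover have "run C' x = apply_layer (shifted_comparators L i) (run C x)" for x
    using apply_layer_shifted_layer[OF A assms(8,9)[folded A_def] L_hyps]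
    unfolding run_def C'_def A'_def C by simp
  moreover have "is_layer n (shifted_comparators L i)"
    using is_layer_shifted_layer[OF L_hyps] is_layer_subset unfolding shifted_layer_def by blast
  ultimately have "sorting_network n C'"
    using sorted sorted01_apply_layer unfolding sorting_network_def by simp
  moreover have "length C' = d" "C' ! (d - 2) = A'" "C' ! (d - 1) = shifted_layer L i"
    using assms(2,3) unfolding C'_def P_def by (auto simp: nth_append)
  moreover have "used A' (i + 1)" "used A' (i + 2)"
    using assms(6) unfolding A'_def A_def by (auto simp: used_insert)
  moreover have "last_layer_nf n (shifted_layer L i)"
    using last_layer_nf_shifted_layer L assms(4,5) unfolding L_def by blast
  moreover have "used (shifted_layer L i) (i + 1)" "used (shifted_layer L i) (i + 2)"
    using L_hyps(2) by (simp_all add: used_shifted_layer[OF L] used_shifted_comparators)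
  ultimately show ?thesis by (intro exI[of _ C']) simp
qed

end
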